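(* Let $p\in[1,\infty)$, $w$ a weight sequence, $a\in L_{p,w}$ and $i\in\mathbb{N}$. Then $$S_i(a)+\tilde S_i(a)\le\|a\|_{p,w}^p=H_i(a)+\tilde H_i(a)=W_i(a)+\tilde W_i(a)\le S_i(a)+T_i(a).$$
   Context: A weight sequence is a sequence $w=(w_i)$ of positive reals with $w_1=1\ge w_2\ge\dots$, $w_i\to0$, and $\sum_i w_i=+\infty$. For a real sequence $a$, $\|a\|_{p,w}=\sup_{\sigma}\big(\sum_{i=1}^\infty |a_{\sigma_i}|^p w_i\big)^{1/p}$ over all permutations $\sigma$ of $\mathbb{N}$; $L_{p,w}$ is the set of real sequences with finite norm. For $a\in L_{p,w}$, let $\sigma=\sigma^a:\mathbb{N}\to\mathbb{N}$ be defined recursively: $\sigma_i$ is the element $j$ of $\mathbb{N}\setminus\{\sigma_1,\dots,\sigma_{i-1}\}$ with $|a_j|$ maximal, taking the smallest such index in case of ties (for $a\in L_{p,w}$ this is well defined, $\sigma$ is injective and $|a_{\sigma_i}|$ is nonincreasing). Write $\sigma^{-1}$ for its inverse on $\sigma(\mathbb{N})$, with the convention $w_{\sigma^{-1}_j}:=0$ if $j\notin\sigma(\mathbb{N})$. Definitions: $S_i(a)=\|(a_1,\dots,a_i,0,0,\dots)\|_{p,w}^p$; $\tilde S_i(a)=\sup_{\tau}\sum_{j=1}^\infty|a_{i+\tau_j}|^p w_{i+j}$ over permutations $\tau$ of $\mathbb{N}$ (the $p$-th power of the Lorentz-type norm of the tail $(a_{i+1},a_{i+2},\dots)$ with weights $(w_{i+1},w_{i+2},\dots)$);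 $H_i(a)=\sum_{j=1}^i|a_j|^p w_{\sigma^{-1}_j}$; $\tilde H_i(a)=\sum_{j=i+1}^\infty|a_j|^p w_{\sigma^{-1}_j}$; $W_i(a)=\sum_{j=1}^i|a_{\sigma_j}|^p w_j$; $\tilde W_i(a)=\sum_{j=i+1}^\infty|a_{\sigma_j}|^p w_j$; $T_i(a)=\|(a_{i+1},a_{i+2},\dots)\|_{p,w}^p$. *)

theory Defs
  imports "HOL-Analysis.Analysis"
begin

text \<open>Convention: sequences are 0-indexed, i.e. the paper's a_k is a (k-1), w_k is w (k-1).\<close>

definition weight_seq :: "(nat \<Rightarrow> real) \<Rightarrow> bool" where
  "weight_seq w \<longleftrightarrow> w 0 = 1 \<and> (\<forall>i. 0 < w i) \<and> (\<forall>i. w (Suc i) \<le> w i)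
     \<and> w \<longlonglongrightarrow> 0 \<and> \<not> summable w"

definition lw_pow :: "real \<Rightarrow> (nat \<Rightarrow> real) \<Rightarrow> (nat \<Rightarrow> real) \<Rightarrow> ennreal" where
  "lw_pow p w a = (SUP \<sigma>\<in>{\<sigma>::nat\<Rightarrow>nat. bij \<sigma>}. \<Sum>j. ennreal (\<bar>a (\<sigma> j)\<bar> powr p * w j))"

definition in_Lpw :: "real \<Rightarrow> (nat \<Rightarrow> real) \<Rightarrow> (nat \<Rightarrow> real) \<Rightarrow> bool" where
  "in_Lpw p w a \<longleftrightarrow> lw_pow p w a < \<infinity>"

text \<open>Greedy rearrangement sigma^a: list of the first n chosen indices.\<close>
fun sig_list :: "(nat \<Rightarrow> real) \<Rightarrow> nat \<Rightarrow> nat list" where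
  "sig_list a 0 = []"
| "sig_list a (Suc n) = sig_list a n @
     [LEAST j. j \<notin> set (sig_list a n) \<and> (\<forall>k. k \<notin> set (sig_list a n) \<longrightarrow> \<bar>a k\<bar> \<le> \<bar>a j\<bar>)]"

definition sig :: "(nat \<Rightarrow> real) \<Rightarrow> nat \<Rightarrow> nat" where
  "sig a n = sig_list a (Suc n) ! n"

text \<open>w_{sigma^{-1}_j}, with value 0 if j is not in the range of sigma.\<close>
definition winv :: "(nat \<Rightarrow> real) \<Rightarrow> (nat \<Rightarrow> real) \<Rightarrow> nat \<Rightarrow> real" where
  "winv w a j = (if j \<in> range (sig a) then w (the_inv (sig a) j) else 0)"

definition S_fn :: "real \<Rightarrow> (nat \<Rightarrow> real) \<Rightarrow> nat \<Rightarrow> (nat \<Rightarrow> real) \<Rightarrow> ennreal" where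
  "S_fn p w i a = lw_pow p w (\<lambda>k. if k < i then a k else 0)"

definition St_fn :: "real \<Rightarrow> (nat \<Rightarrow> real) \<Rightarrow> nat \<Rightarrow> (nat \<Rightarrow> real) \<Rightarrow> ennreal" where
  "St_fn p w i a = (SUP \<tau>\<in>{\<tau>::nat\<Rightarrow>nat. bij \<tau>}. \<Sum>j. ennreal (\<bar>a (i + \<tau> j)\<bar> powr p * w (i + j)))"

definition H_fn :: "real \<Rightarrow> (nat \<Rightarrow> real) \<Rightarrow> nat \<Rightarrow> (nat \<Rightarrow> real) \<Rightarrow> ennreal" where
  "H_fn p w i a = ennreal (\<Sum>j<i. \<bar>a j\<bar> powr p * winv w a j)"

definition Ht_fn :: "real \<Rightarrow> (nat \<Rightarrow> real) \<Rightarrow> nat \<Rightarrow> (nat \<Rightarrow> real) \<Rightarrow> ennreal" where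
  "Ht_fn p w i a = (\<Sum>k. ennreal (\<bar>a (i + k)\<bar> powr p * winv w a (i + k)))"

definition W_fn :: "real \<Rightarrow> (nat \<Rightarrow> real) \<Rightarrow> nat \<Rightarrow> (nat \<Rightarrow> real) \<Rightarrow> ennreal" where
  "W_fn p w i a = ennreal (\<Sum>j<i. \<bar>a (sig a j)\<bar> powr p * w j)"

definition Wt_fn :: "real \<Rightarrow> (nat \<Rightarrow> real) \<Rightarrow> nat \<Rightarrow> (nat \<Rightarrow> real) \<Rightarrow> ennreal" where
  "Wt_fn p w i a = (\<Sum>k. ennreal (\<bar>a (sig a (i + k))\<bar> powr p * w (i + k)))"

definition T_fn :: "real \<Rightarrow> (nat \<Rightarrow> real) \<Rightarrow> nat \<Rightarrow> (nat \<Rightarrow> real) \<Rightarrow> ennreal" where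
  "T_fn p w i a = lw_pow p w (\<lambda>k. a (i + k))"

end

theory Submission
  imports Defs
begin

text \<open>
  The greedy rearrangement \<open>sig a\<close> lists the entries of \<open>a\<close> by decreasing modulus (it exists
  because \<open>a \<in> L\<^sub>p\<^sub>,\<^sub>w\<close> forces \<open>a \<longlonglongrightarrow> 0\<close>, as \<open>\<Sum> w\<close> diverges). An exchange argument shows that
  its partial sums of \<open>\<bar>a\<bar>\<^sup>p\<close> dominate those of any rearrangement, and Abel summation
  against the decreasing weights turns this into domination of the weighted partial sums;
  hence \<open>\<parallel>a\<parallel>\<^sup>p\<close> is the weighted series along \<open>sig a\<close>, and \<open>H\<close> and \<open>W\<close> are two indexings of it.
  For the outer inequalities: a rearrangement of the first \<open>i\<close> entries into the first \<open>i\<close>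
  positions followed by a rearrangement of the tail is a rearrangement of \<open>a\<close>, which gives
  \<open>S + S\<^sup>~ \<le> \<parallel>a\<parallel>\<^sup>p\<close>; and splitting the greedy series according to whether \<open>sig a j < i\<close> bounds
  it by \<open>S + T\<close>.
\<close>

lemma weight_seq_nonneg: "weight_seq w \<Longrightarrow> 0 \<le> w i"
  unfolding weight_seq_def by (simp add: less_imp_le)

lemma weight_seq_decseq: "weight_seq w \<Longrightarrow> decseq w"
  unfolding weight_seq_def by (simp add: decseq_SucI)

lemma LIMSEQ_zero_iff_finite_ge:
  fixes X :: "nat \<Rightarrow> real"
  shows "X \<longlonglongrightarrow> 0 \<longleftrightarrow> (\<forall>\<epsilon>>0. finite {k. \<epsilon> \<le> \<bar>X k\<bar>})"
  by (simp add: tendsto_iff eventually_cofinite cofinite_eq_sequentially[symmetric] not_less)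

lemma suminf_ennreal_split:
  assumes "\<And>j. 0 \<le> f j"
  shows "ennreal (\<Sum>j<i. f j) + (\<Sum>k. ennreal (f (i + k))) = (\<Sum>j. ennreal (f j))"
proof -
  have "(\<Sum>j. ennreal (f j)) = (\<Sum>k. ennreal (f (k + i))) + (\<Sum>j<i. ennreal (f j))"
    by (rule suminf_offset) simp
  then show ?thesis
    using assms by (simp add: sum_ennreal ac_simps)
qed

lemma bij_betw_diff_atLeast: "bij_betw (\<lambda>k::nat. k - n) {n..} UNIV"
  by (rule bij_betw_byWitness[where f' = "(+) n"]) auto

lemma inj_on_lessThan_extend_bij:
  fixes f :: "nat \<Rightarrow> nat"
  assumes "inj_on f {..<n}"
  obtains \<pi> where "bij \<pi>" "\<And>k. k < n \<Longrightarrow> \<pi> k = f k"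
proof -
  let ?B = "UNIV - f ` {..<n}"
  have "infinite ?B"
    by (simp add: Diff_infinite_finite)
  then have "bij_betw (enumerate ?B \<circ> (\<lambda>k. k - n)) {n..} ?B"
    using bij_betw_diff_atLeast bij_enumerate by (blast intro: bij_betw_trans)
  then have "bij_betw (\<lambda>k. enumerate ?B (k - n)) {n..} ?B"
    by (simp add: comp_def)
  then have "bij_betw (\<lambda>k. if k \<in> {..<n} then f k else enumerate ?B (k - n))
      ({..<n} \<union> {n..}) (f ` {..<n} \<union> ?B)"
    using assms by (intro bij_betw_disjoint_Un) (auto simp: inj_on_imp_bij_betw)
  moreover have "{..<n} \<union> {n..} = UNIV" "f ` {..<n} \<union> ?B = UNIV"
    by auto
  ultimately show ?thesis
    using that[of "\<lambda>k. if k < n then f k else enumerate ?B (k - n)"] by simp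
qed

lemma bij_if_lessThan_shift:
  fixes h \<tau> :: "nat \<Rightarrow> nat"
  assumes "bij_betw h {..<n} {..<n}" and "bij \<tau>"
  shows "bij (\<lambda>k. if k < n then h k else n + \<tau> (k - n))"
proof -
  have "bij_betw ((+) n) UNIV {n..}"
    by (rule bij_betw_byWitness[where f' = "\<lambda>k. k - n"]) auto
  with bij_betw_diff_atLeast assms(2) have "bij_betw ((+) n \<circ> \<tau> \<circ> (\<lambda>k. k - n)) {n..} {n..}"
    by (blast intro: bij_betw_trans)
  then have "bij_betw (\<lambda>k. n + \<tau> (k - n)) {n..} {n..}"
    by (simp add: comp_def)
  then have "bij_betw (\<lambda>k. if k \<in> {..<n} then h k else n + \<tau> (k - n))
      ({..<n} \<union> {n..}) ({..<n} \<union> {n..})"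
    using assms(1) by (intro bij_betw_disjoint_Un) auto
  moreover have "{..<n} \<union> {n..} = UNIV"
    by auto
  ultimately show ?thesis
    by simp
qed

lemma sum_mult_decseq_le_enumerate:
  fixes h w :: "nat \<Rightarrow> real"
  assumes "finite J" and "\<And>j. 0 \<le> h j" and "decseq w"
  shows "(\<Sum>j\<in>J. h j * w j) \<le> (\<Sum>k<card J. h (enumerate J k) * w k)"
proof -
  have "(\<Sum>j\<in>J. h j * w j) = (\<Sum>k<card J. h (enumerate J k) * w (enumerate J k))"
    by (rule sum.reindex_bij_betw[OF finite_bij_enumerate[OF assms(1)], symmetric])
  also have "\<dots> \<le> (\<Sum>k<card J. h (enumerate J k) * w k)"
    using assms by (intro sum_mono mult_left_mono) (auto intro: decseqD finite_le_enumerate)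
  finally show ?thesis .
qed

lemma sum_mult_decseq_le_of_prefix_sums_le:
  fixes c d w :: "nat \<Rightarrow> real"
  assumes prefix: "\<And>k. k \<le> N \<Longrightarrow> (\<Sum>j<k. c j) \<le> (\<Sum>j<k. d j)"
    and "decseq w" and "\<And>j. 0 \<le> w j"
  shows "(\<Sum>j<N. c j * w j) \<le> (\<Sum>j<N. d j * w j)"
proof -
  let ?D = "\<lambda>n. \<Sum>j<n. d j - c j"
  have abel: "w n * ?D n \<le> (\<Sum>j<n. (d j - c j) * w j)" if "n \<le> N" for n
    using that
  proof (induction n)
    case (Suc n)
    have "0 \<le> ?D (Suc n)"
      using prefix[OF Suc.prems] by (simp add: sum_subtractf)
    then have "w (Suc n) * ?D (Suc n) \<le> w n * ?D (Suc n)"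
      using decseqD[OF \<open>decseq w\<close>, of n "Suc n"] by (simp add: mult_right_mono)
    also have "\<dots> = w n * ?D n + (d n - c n) * w n"
      by (simp add: algebra_simps)
    also have "\<dots> \<le> (\<Sum>j<Suc n. (d j - c j) * w j)"
      using Suc by simp
    finally show ?case .
  qed simp
  have "0 \<le> w N * ?D N"
    using prefix assms(3) by (simp add: sum_subtractf)
  with abel[of N] show ?thesis
    by (simp add: algebra_simps sum_subtractf)
qed

lemma lw_pow_ge_prefix_sum:
  assumes "weight_seq w" and "inj_on f {..<n}"
  shows "ennreal (\<Sum>k<n. \<bar>x (f k)\<bar> powr p * w k) \<le> lw_pow p w x"
proof -
  obtain \<pi> where \<pi>: "bij \<pi>" "\<And>k. k < n \<Longrightarrow> \<pi> k = f k"
    using inj_on_lessThan_extend_bij[OF assms(2)] by blast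
  have "ennreal (\<Sum>k<n. \<bar>x (f k)\<bar> powr p * w k) = (\<Sum>k<n. ennreal (\<bar>x (\<pi> k)\<bar> powr p * w k))"
    using \<pi>(2) weight_seq_nonneg[OF assms(1)] by (simp add: sum_ennreal)
  also have "\<dots> \<le> (\<Sum>k. ennreal (\<bar>x (\<pi> k)\<bar> powr p * w k))"
    by (rule sum_le_suminf) auto
  also have "\<dots> \<le> lw_pow p w x"
    unfolding lw_pow_def using \<pi>(1) by (intro SUP_upper) simp
  finally show ?thesis .
qed

lemma lw_pow_ge_finite_sum:
  assumes "weight_seq w" and "finite F" and "inj_on g F"
  shows "ennreal (\<Sum>j\<in>F. \<bar>x (g j)\<bar> powr p * w j) \<le> lw_pow p w x"
proof -
  have "(\<Sum>j\<in>F. \<bar>x (g j)\<bar> powr p * w j) \<le> (\<Sum>k<card F. \<bar>x (g (enumerate F k))\<bar> powr p * w k)"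
    by (rule sum_mult_decseq_le_enumerate[OF assms(2) _ weight_seq_decseq[OF assms(1)]]) simp
  moreover have "inj_on (g \<circ> enumerate F) {..<card F}"
    using finite_bij_enumerate[OF assms(2)] assms(3) by (auto simp: bij_betw_def intro: comp_inj_on)
  then have "ennreal (\<Sum>k<card F. \<bar>x (g (enumerate F k))\<bar> powr p * w k) \<le> lw_pow p w x"
    using lw_pow_ge_prefix_sum[OF assms(1)] by fastforce
  ultimately show ?thesis
    using ennreal_leI order_trans by blast
qed

lemma lw_pow_ge_suminf:
  assumes "weight_seq w" and "inj_on g {j. P j}"
  shows "(\<Sum>j. ennreal (if P j then \<bar>x (g j)\<bar> powr p * w j else 0)) \<le> lw_pow p w x"
  unfolding suminf_eq_SUP
proof (rule SUP_least)
  fix n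
  let ?F = "{j \<in> {..<n}. P j}"
  have "(\<Sum>j<n. ennreal (if P j then \<bar>x (g j)\<bar> powr p * w j else 0))
      = ennreal (\<Sum>j<n. if P j then \<bar>x (g j)\<bar> powr p * w j else 0)"
    using weight_seq_nonneg[OF assms(1)] by (simp add: sum_ennreal)
  also have "\<dots> = ennreal (\<Sum>j\<in>?F. \<bar>x (g j)\<bar> powr p * w j)"
    by (simp only: sum.inter_filter finite_lessThan)
  also have "\<dots> \<le> lw_pow p w x"
    using assms by (intro lw_pow_ge_finite_sum) (auto intro: inj_on_subset)
  finally show "(\<Sum>j<n. ennreal (if P j then \<bar>x (g j)\<bar> powr p * w j else 0)) \<le> lw_pow p w x" .
qed

lemma in_Lpw_LIMSEQ_zero:
  assumes ws: "weight_seq w" and "in_Lpw p w a" and "0 < p"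
  shows "a \<longlonglongrightarrow> 0"
  unfolding LIMSEQ_zero_iff_finite_ge
proof (intro allI impI, rule ccontr)
  fix \<epsilon> :: real
  assume "0 < \<epsilon>" and infinite: "infinite {k. \<epsilon> \<le> \<bar>a k\<bar>}"
  let ?e = "enumerate {k. \<epsilon> \<le> \<bar>a k\<bar>}"
  obtain r where r: "lw_pow p w a = ennreal r" "0 \<le> r"
    using assms(2) by (cases "lw_pow p w a") (auto simp: in_Lpw_def)
  have "inj ?e"
    using strict_mono_enumerate[OF infinite] by (rule strict_mono_imp_inj_on)
  have "\<epsilon> powr p * (\<Sum>k<n. w k) \<le> r" for n
  proof -
    have "(\<Sum>k<n. \<epsilon> powr p * w k) \<le> (\<Sum>k<n. \<bar>a (?e k)\<bar> powr p * w k)"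
      using enumerate_in_set[OF infinite] \<open>0 < \<epsilon>\<close> \<open>0 < p\<close> weight_seq_nonneg[OF ws]
      by (intro sum_mono mult_right_mono) (auto intro: powr_mono2)
    also have "\<dots> \<le> r"
      using lw_pow_ge_prefix_sum[OF ws, of ?e n a p] \<open>inj ?e\<close> r by (simp add: inj_on_subset)
    finally show ?thesis
      by (simp add: sum_distrib_left)
  qed
  then have "summable w"
    using \<open>0 < \<epsilon>\<close> weight_seq_nonneg[OF ws]
    by (intro summableI_nonneg_bounded[where x = "r / \<epsilon> powr p"]) (auto simp: field_simps)
  then show False
    using ws by (simp add: weight_seq_def)
qed

lemma ex_max_abs_outside_finite:
  fixes a :: "nat \<Rightarrow> real"
  assumes "a \<longlonglongrightarrow> 0" and "finite L"
  shows "\<exists>j. j \<notin> L \<and> (\<forall>k. k \<notin> L \<longrightarrow> \<bar>a k\<bar> \<le> \<bar>a j\<bar>)"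
proof (cases "\<forall>k. k \<notin> L \<longrightarrow> a k = 0")
  case True
  obtain j where "j \<notin> L"
    using assms(2) ex_new_if_finite infinite_UNIV_nat by blast
  with True show ?thesis
    by auto
next
  case False
  then obtain k0 where "k0 \<notin> L" "a k0 \<noteq> 0"
    by auto
  let ?S = "{k. k \<notin> L \<and> \<bar>a k0\<bar> \<le> \<bar>a k\<bar>}"
  have "finite ?S"
    using assms(1) \<open>a k0 \<noteq> 0\<close> unfolding LIMSEQ_zero_iff_finite_ge
    by (force intro: finite_subset[of ?S "{k. \<bar>a k0\<bar> \<le> \<bar>a k\<bar>}"])
  moreover have "k0 \<in> ?S"
    using \<open>k0 \<notin> L\<close> by simp
  ultimately obtain j where "j \<in> ?S" and j: "\<bar>a j\<bar> = Max ((\<lambda>k. \<bar>a k\<bar>) ` ?S)"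
    using Max_in[of "(\<lambda>k. \<bar>a k\<bar>) ` ?S"] by fastforce
  have "\<bar>a k\<bar> \<le> \<bar>a j\<bar>" if "k \<notin> L" for k
  proof (cases "k \<in> ?S")
    case True
    then show ?thesis
      using \<open>finite ?S\<close> unfolding j by simp
  next
    case False
    then show ?thesis
      using that \<open>j \<in> ?S\<close> by auto
  qed
  with \<open>j \<in> ?S\<close> show ?thesis
    by blast
qed

lemma length_sig_list [simp]: "length (sig_list a n) = n"
  by (induction n) auto

lemma nth_sig_list: "k < n \<Longrightarrow> sig_list a n ! k = sig a k"
proof (induction n)
  case (Suc n)
  then show ?case
    by (auto simp: nth_append sig_def less_Suc_eq)
qed simp

lemma set_sig_list: "set (sig_list a n) = sig a ` {..<n}"
  unfolding set_conv_nth by (force simp: nth_sig_list)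

lemma sig_greedy:
  assumes "a \<longlonglongrightarrow> 0"
  shows "sig a n \<notin> sig a ` {..<n} \<and> (\<forall>k. k \<notin> sig a ` {..<n} \<longrightarrow> \<bar>a k\<bar> \<le> \<bar>a (sig a n)\<bar>)"
proof -
  let ?P = "\<lambda>j. j \<notin> set (sig_list a n) \<and> (\<forall>k. k \<notin> set (sig_list a n) \<longrightarrow> \<bar>a k\<bar> \<le> \<bar>a j\<bar>)"
  have "\<exists>j. ?P j"
    using ex_max_abs_outside_finite[OF assms] by blast
  then have "?P (LEAST j. ?P j)"
    by (rule LeastI_ex)
  moreover have "sig a n = (LEAST j. ?P j)"
    by (simp add: sig_def nth_append)
  ultimately have "?P (sig a n)"
    by simp
  then show ?thesis
    by (simp add: set_sig_list)
qed

lemma inj_sig: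
  assumes "a \<longlonglongrightarrow> 0"
  shows "inj (sig a)"
proof (rule linorder_injI)
  fix x y :: nat
  assume "x < y"
  then show "sig a x \<noteq> sig a y"
    using sig_greedy[OF assms, of y] by (metis imageI lessThan_iff)
qed

lemma abs_le_sig:
  assumes "a \<longlonglongrightarrow> 0" and "x \<notin> sig a ` {..<m}" and "j < m"
  shows "\<bar>a x\<bar> \<le> \<bar>a (sig a j)\<bar>"
proof -
  have "x \<notin> sig a ` {..<j}"
    using assms(2,3) by auto
  then show ?thesis
    using sig_greedy[OF assms(1), of j] by blast
qed

lemma sum_powr_le_sig_prefix:
  assumes "a \<longlonglongrightarrow> 0" and "finite F" and "0 \<le> p"
  shows "(\<Sum>x\<in>F. \<bar>a x\<bar> powr p) \<le> (\<Sum>j<card F. \<bar>a (sig a j)\<bar> powr p)"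
proof -
  let ?b = "\<lambda>x. \<bar>a x\<bar> powr p"
  define G where "G = sig a ` {..<card F}"
  have inj: "inj_on (sig a) {..<card F}"
    using inj_sig[OF assms(1)] by (rule inj_on_subset) simp
  have "finite G" and "card G = card F"
    unfolding G_def using card_image[OF inj] by simp_all
  then have "card (F - G) = card (G - F)"
    using card_Diff_subset_Int[of F G] card_Diff_subset_Int[of G F] assms(2)
    by (simp add: Int_commute)
  then obtain h where h: "bij_betw h (F - G) (G - F)"
    using finite_same_card_bij[of "F - G" "G - F"] assms(2) \<open>finite G\<close> by auto
  \<comment> \<open>exchange argument: trade the indices of \<open>F\<close> outside the greedy prefix \<open>G\<close> for those of \<open>G\<close> outside \<open>F\<close>\<close>
  have "sum ?b (F - G) \<le> sum (?b \<circ> h) (F - G)"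
  proof (rule sum_mono)
    fix x
    assume x: "x \<in> F - G"
    then have "h x \<in> G - F"
      using bij_betwE[OF h] by blast
    then obtain j where "j < card F" "h x = sig a j"
      by (auto simp: G_def)
    then show "?b x \<le> (?b \<circ> h) x"
      using abs_le_sig[OF assms(1), of x "card F" j] x assms(3) by (simp add: G_def powr_mono2)
  qed
  also have "\<dots> = sum ?b (G - F)"
    using sum.reindex_bij_betw[OF h, of ?b] by (simp add: comp_def)
  finally have "sum ?b F \<le> sum ?b G"
    using sum.Int_Diff[OF assms(2), of ?b G] sum.Int_Diff[OF \<open>finite G\<close>, of ?b F]
    by (simp add: Int_commute)
  also have "\<dots> = (\<Sum>j<card F. ?b (sig a j))"
    unfolding G_def by (rule sum.reindex[OF inj, unfolded comp_def])
  finally show ?thesis .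
qed

lemma prefix_sum_le_sig_prefix_sum:
  assumes "weight_seq w" and "a \<longlonglongrightarrow> 0" and "0 \<le> p" and "inj \<pi>"
  shows "(\<Sum>j<N. \<bar>a (\<pi> j)\<bar> powr p * w j) \<le> (\<Sum>j<N. \<bar>a (sig a j)\<bar> powr p * w j)"
proof (rule sum_mult_decseq_le_of_prefix_sums_le)
  fix k
  have inj: "inj_on \<pi> {..<k}"
    using assms(4) by (rule inj_on_subset) simp
  then have "(\<Sum>j<k. \<bar>a (\<pi> j)\<bar> powr p) = (\<Sum>x\<in>\<pi> ` {..<k}. \<bar>a x\<bar> powr p)"
    by (simp add: sum.reindex)
  also have "\<dots> \<le> (\<Sum>j<k. \<bar>a (sig a j)\<bar> powr p)"
    using sum_powr_le_sig_prefix[OF assms(2) _ assms(3), of "\<pi> ` {..<k}"] inj by (simp add: card_image)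
  finally show "(\<Sum>j<k. \<bar>a (\<pi> j)\<bar> powr p) \<le> (\<Sum>j<k. \<bar>a (sig a j)\<bar> powr p)" .
qed (use assms(1) in \<open>auto intro: weight_seq_decseq weight_seq_nonneg\<close>)

lemma lw_pow_eq_sig_suminf:
  assumes "weight_seq w" and "a \<longlonglongrightarrow> 0" and "0 \<le> p"
  shows "lw_pow p w a = (\<Sum>j. ennreal (\<bar>a (sig a j)\<bar> powr p * w j))"
proof (rule antisym)
  show "lw_pow p w a \<le> (\<Sum>j. ennreal (\<bar>a (sig a j)\<bar> powr p * w j))"
    unfolding lw_pow_def
  proof (rule SUP_least)
    fix \<pi> :: "nat \<Rightarrow> nat"
    assume "\<pi> \<in> {\<sigma>. bij \<sigma>}"
    then have "inj \<pi>"
      by (simp add: bij_is_inj)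
    have "(\<Sum>j<N. ennreal (\<bar>a (\<pi> j)\<bar> powr p * w j)) \<le> (\<Sum>j<N. ennreal (\<bar>a (sig a j)\<bar> powr p * w j))"
      for N
      using prefix_sum_le_sig_prefix_sum[OF assms \<open>inj \<pi>\<close>, of N] weight_seq_nonneg[OF assms(1)]
      by (simp add: sum_ennreal ennreal_leI)
    then show "(\<Sum>j. ennreal (\<bar>a (\<pi> j)\<bar> powr p * w j)) \<le> (\<Sum>j. ennreal (\<bar>a (sig a j)\<bar> powr p * w j))"
      unfolding suminf_eq_SUP by (intro SUP_mono) blast
  qed
  \<comment> \<open>not just \<open>SUP_upper\<close>: \<open>sig a\<close> misses the zeros of \<open>a\<close> when infinitely many entries are nonzero\<close>
  show "(\<Sum>j. ennreal (\<bar>a (sig a j)\<bar> powr p * w j)) \<le> lw_pow p w a"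
    using lw_pow_ge_suminf[OF assms(1), of "sig a" "\<lambda>_. True" a p] inj_sig[OF assms(2)] by simp
qed

lemma suminf_winv_eq_sig_suminf:
  assumes "a \<longlonglongrightarrow> 0"
  shows "(\<Sum>j. ennreal (\<bar>a j\<bar> powr p * winv w a j)) = (\<Sum>j. ennreal (\<bar>a (sig a j)\<bar> powr p * w j))"
proof -
  let ?f = "\<lambda>j. ennreal (\<bar>a j\<bar> powr p * winv w a j)"
  have inj: "inj (sig a)"
    using inj_sig[OF assms] .
  have "(\<Sum>j. ?f j) = (\<integral>\<^sup>+j. ?f j \<partial>count_space UNIV)"
    by (simp add: nn_integral_count_space_nat)
  also have "\<dots> = (\<integral>\<^sup>+j. ?f j * indicator (range (sig a)) j \<partial>count_space UNIV)"
    by (intro nn_integral_cong) (simp add: winv_def indicator_def)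
  also have "\<dots> = (\<integral>\<^sup>+j. ?f j \<partial>count_space (range (sig a)))"
    by (simp add: nn_integral_count_space_indicator)
  also have "\<dots> = (\<integral>\<^sup>+j. ?f (sig a j) \<partial>count_space UNIV)"
    using nn_integral_bij_count_space[of "sig a" UNIV "range (sig a)" ?f] inj
    by (simp add: bij_betw_def)
  also have "\<dots> = (\<Sum>j. ennreal (\<bar>a (sig a j)\<bar> powr p * w j))"
    by (simp add: nn_integral_count_space_nat winv_def the_inv_f_f[OF inj])
  finally show ?thesis .
qed

lemma sig_suminf_le_S_fn_plus_T_fn:
  assumes "weight_seq w" and "a \<longlonglongrightarrow> 0"
  shows "(\<Sum>j. ennreal (\<bar>a (sig a j)\<bar> powr p * w j)) \<le> S_fn p w i a + T_fn p w i a"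
proof -
  let ?b = "\<lambda>j. \<bar>a (sig a j)\<bar> powr p * w j"
  have inj: "inj (sig a)"
    using inj_sig[OF assms(2)] .
  have "(\<Sum>j. ennreal (?b j)) = (\<Sum>j. ennreal (if sig a j < i then ?b j else 0))
      + (\<Sum>j. ennreal (if \<not> sig a j < i then ?b j else 0))"
    by (subst suminf_add) (auto intro!: suminf_cong)
  also have "\<dots> \<le> S_fn p w i a + T_fn p w i a"
  proof (rule add_mono)
    show "(\<Sum>j. ennreal (if sig a j < i then ?b j else 0)) \<le> S_fn p w i a"
      using lw_pow_ge_suminf[OF assms(1), of "sig a" "\<lambda>j. sig a j < i" "\<lambda>k. if k < i then a k else 0" p]
        inj_on_subset[OF inj]
      by (simp add: S_fn_def cong: if_cong)
    have "inj_on (\<lambda>j. sig a j - i) {j. \<not> sig a j < i}"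
    proof (rule inj_onI)
      fix x y
      assume "x \<in> {j. \<not> sig a j < i}" "y \<in> {j. \<not> sig a j < i}" "sig a x - i = sig a y - i"
      then have "sig a x = sig a y"
        by simp
      then show "x = y"
        using inj by (simp add: inj_eq)
    qed
    then show "(\<Sum>j. ennreal (if \<not> sig a j < i then ?b j else 0)) \<le> T_fn p w i a"
      using lw_pow_ge_suminf[OF assms(1), of "\<lambda>j. sig a j - i" "\<lambda>j. \<not> sig a j < i" "\<lambda>k. a (i + k)" p]
      by (simp add: T_fn_def cong: if_cong)
  qed
  finally show ?thesis .
qed

lemma truncated_suminf_le_permuted_prefix:
  assumes "weight_seq w" and "bij \<pi>"
  obtains h where "bij_betw h {..<i} {..<i}"
    and "(\<Sum>j. ennreal (\<bar>if \<pi> j < i then a (\<pi> j) else 0\<bar> powr p * w j))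
      \<le> ennreal (\<Sum>k<i. \<bar>a (h k)\<bar> powr p * w k)"
proof -
  let ?J = "\<pi> -` {..<i}"
  have J: "bij_betw \<pi> ?J {..<i}"
    unfolding bij_betw_def
    using inj_on_subset[OF bij_is_inj[OF assms(2)]] surj_image_vimage_eq[OF bij_is_surj[OF assms(2)]]
    by blast
  then have "finite ?J" and "card ?J = i"
    using bij_betw_finite[OF J] bij_betw_same_card[OF J] by simp_all
  then have e: "bij_betw (enumerate ?J) {..<i} ?J"
    using finite_bij_enumerate[of ?J] by simp
  have "(\<Sum>j. ennreal (\<bar>if \<pi> j < i then a (\<pi> j) else 0\<bar> powr p * w j))
      = ennreal (\<Sum>j\<in>?J. \<bar>a (\<pi> j)\<bar> powr p * w j)"
    using \<open>finite ?J\<close> weight_seq_nonneg[OF assms(1)]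
    by (subst suminf_finite[of ?J]) (auto simp: sum_ennreal intro: sum.cong)
  also have "\<dots> \<le> ennreal (\<Sum>k<i. \<bar>a (\<pi> (enumerate ?J k))\<bar> powr p * w k)"
    using sum_mult_decseq_le_enumerate[OF \<open>finite ?J\<close> _ weight_seq_decseq[OF assms(1)],
        of "\<lambda>j. \<bar>a (\<pi> j)\<bar> powr p"] \<open>card ?J = i\<close>
    by (simp add: ennreal_leI)
  finally show ?thesis
    using that[of "\<pi> \<circ> enumerate ?J"] bij_betw_trans[OF e J] by simp
qed

lemma S_fn_plus_St_fn_le_lw_pow:
  assumes "weight_seq w"
  shows "S_fn p w i a + St_fn p w i a \<le> lw_pow p w a"
proof -
  let ?X = "\<lambda>\<pi>. \<Sum>j. ennreal (\<bar>if \<pi> j < i then a (\<pi> j) else 0\<bar> powr p * w j)"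
  let ?Y = "\<lambda>\<tau>. \<Sum>j. ennreal (\<bar>a (i + \<tau> j)\<bar> powr p * w (i + j))"
  have key: "?X \<pi> + ?Y \<tau> \<le> lw_pow p w a" if \<pi>: "bij \<pi>" and \<tau>: "bij \<tau>" for \<pi> \<tau>
  proof -
    obtain h where h: "bij_betw h {..<i} {..<i}"
      and X: "?X \<pi> \<le> ennreal (\<Sum>k<i. \<bar>a (h k)\<bar> powr p * w k)"
      using truncated_suminf_le_permuted_prefix[OF assms \<pi>] by blast
    let ?f = "\<lambda>k. if k < i then h k else i + \<tau> (k - i)"
    have "?X \<pi> + ?Y \<tau> \<le> ennreal (\<Sum>k<i. \<bar>a (?f k)\<bar> powr p * w k)
        + (\<Sum>j. ennreal (\<bar>a (?f (i + j))\<bar> powr p * w (i + j)))"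
      using X by (simp add: add_right_mono)
    also have "\<dots> = (\<Sum>k. ennreal (\<bar>a (?f k)\<bar> powr p * w k))"
      by (rule suminf_ennreal_split) (simp add: weight_seq_nonneg[OF assms])
    also have "\<dots> \<le> lw_pow p w a"
      unfolding lw_pow_def using bij_if_lessThan_shift[OF h \<tau>] by (intro SUP_upper) simp
    finally show ?thesis .
  qed
  have ne: "{\<sigma>::nat \<Rightarrow> nat. bij \<sigma>} \<noteq> {}"
    using bij_id by blast
  have "S_fn p w i a + St_fn p w i a = (SUP \<pi>\<in>{\<sigma>. bij \<sigma>}. ?X \<pi> + St_fn p w i a)"
    unfolding S_fn_def lw_pow_def by (rule ennreal_SUP_add_left[OF ne, symmetric])
  also have "\<dots> \<le> lw_pow p w a"
  proof (rule SUP_least)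
    fix \<pi> :: "nat \<Rightarrow> nat"
    assume "\<pi> \<in> {\<sigma>. bij \<sigma>}"
    have "?X \<pi> + St_fn p w i a = (SUP \<tau>\<in>{\<sigma>. bij \<sigma>}. ?X \<pi> + ?Y \<tau>)"
      unfolding St_fn_def by (rule ennreal_SUP_add_right[OF ne])
    also have "\<dots> \<le> lw_pow p w a"
      using key \<open>\<pi> \<in> {\<sigma>. bij \<sigma>}\<close> by (auto intro!: SUP_least)
    finally show "?X \<pi> + St_fn p w i a \<le> lw_pow p w a" .
  qed
  finally show ?thesis .
qed

theorem mainTheorem10:
  fixes p :: real and w a :: "nat \<Rightarrow> real" and i :: nat
  assumes "1 \<le> p" and "weight_seq w" and "in_Lpw p w a"
  shows "S_fn p w i a + St_fn p w i a \<le> lw_pow p w a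
    \<and> lw_pow p w a = H_fn p w i a + Ht_fn p w i a
    \<and> H_fn p w i a + Ht_fn p w i a = W_fn p w i a + Wt_fn p w i a
    \<and> W_fn p w i a + Wt_fn p w i a \<le> S_fn p w i a + T_fn p w i a"
proof -
  have ws: "weight_seq w" and "0 \<le> p"
    using assms by auto
  have "a \<longlonglongrightarrow> 0"
    using in_Lpw_LIMSEQ_zero[OF ws assms(3)] assms(1) by simp
  have "H_fn p w i a + Ht_fn p w i a = (\<Sum>j. ennreal (\<bar>a j\<bar> powr p * winv w a j))"
    unfolding H_fn_def Ht_fn_def
    by (rule suminf_ennreal_split) (simp add: winv_def weight_seq_nonneg[OF ws])
  moreover have "W_fn p w i a + Wt_fn p w i a = (\<Sum>j. ennreal (\<bar>a (sig a j)\<bar> powr p * w j))"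
    unfolding W_fn_def Wt_fn_def
    by (rule suminf_ennreal_split) (simp add: weight_seq_nonneg[OF ws])
  ultimately show ?thesis
    using S_fn_plus_St_fn_le_lw_pow[OF ws, of p i a] lw_pow_eq_sig_suminf[OF ws \<open>a \<longlonglongrightarrow> 0\<close> \<open>0 \<le> p\<close>]
      suminf_winv_eq_sig_suminf[OF \<open>a \<longlonglongrightarrow> 0\<close>, of p w] sig_suminf_le_S_fn_plus_T_fn[OF ws \<open>a \<longlonglongrightarrow> 0\<close>, of p i]
    by simp
qed

end
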